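(* Let $p,t\geq 1$ be integers and let $m,n$ be even positive integers with $m\leq n$. Let $G$ be a regular graph of order $p$. If (i) $m+n\equiv 0\pmod 4$ and (ii) $1=2(2ptn+1)^2-(2ptm+2ptn+1)^2$ or $m\geq(\sqrt2-1)n+\frac{\sqrt2-1}{2pt}$, then $tK_{m,n}\otimes G$ is distance magic.
   Context: A graph $G$ on $v$ vertices is distance magic if there is a bijection $f:V(G)\to\{1,\ldots,v\}$ and a constant $k$ such that for every vertex $x$, $\sum_{y\in N(x)}f(y)=k$, where $N(x)$ is the set of neighbours of $x$. $K_{m,n}$ is the complete bipartite graph with parts of sizes $m$ and $n$; $tH$ denotes the disjoint union of $t$ copies of $H$. The Kronecker (tensor) product $G\otimes H$ has vertex set $V(G)\times V(H)$, with $(g,h)\sim(g',h')$ iff $gg'\in E(G)$ and $hh'\in E(H)$. *)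

theory Defs
  imports Complex_Main
begin

definition simple_graph :: "'a set \<Rightarrow> ('a \<Rightarrow> 'a \<Rightarrow> bool) \<Rightarrow> bool" where
  "simple_graph V E \<longleftrightarrow> finite V \<and> (\<forall>x y. E x y \<longrightarrow> x \<in> V \<and> y \<in> V \<and> x \<noteq> y \<and> E y x)"

definition nbhd :: "'a set \<Rightarrow> ('a \<Rightarrow> 'a \<Rightarrow> bool) \<Rightarrow> 'a \<Rightarrow> 'a set" where
  "nbhd V E x = {y \<in> V. E x y}"

definition regular_graph :: "'a set \<Rightarrow> ('a \<Rightarrow> 'a \<Rightarrow> bool) \<Rightarrow> bool" where
  "regular_graph V E \<longleftrightarrow> simple_graph V E \<and> (\<exists>r. \<forall>x\<in>V. card (nbhd V E x) = r)"

definition distance_magic :: "'a set \<Rightarrow> ('a \<Rightarrow> 'a \<Rightarrow> bool) \<Rightarrow> bool" where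
  "distance_magic V E \<longleftrightarrow>
     (\<exists>(f :: 'a \<Rightarrow> nat) (k :: nat). bij_betw f V {1..card V} \<and>
        (\<forall>x\<in>V. (\<Sum>y\<in>nbhd V E x. f y) = k))"

text \<open>Disjoint union of t copies of K_{m,n}: vertex (i, b, j) is the j-th vertex of
  side b (False: part of size m, True: part of size n) in copy i.\<close>

definition tKmn_verts :: "nat \<Rightarrow> nat \<Rightarrow> nat \<Rightarrow> (nat \<times> bool \<times> nat) set" where
  "tKmn_verts t m n = {(i, b, j). i < t \<and> j < (if b then n else m)}"

definition tKmn_adj :: "nat \<Rightarrow> nat \<Rightarrow> nat \<Rightarrow> (nat \<times> bool \<times> nat) \<Rightarrow> (nat \<times> bool \<times> nat) \<Rightarrow> bool" where
  "tKmn_adj t m n u w \<longleftrightarrow> u \<in> tKmn_verts t m n \<and> w \<in> tKmn_verts t m n \<and>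
      fst u = fst w \<and> fst (snd u) \<noteq> fst (snd w)"

definition kron_verts :: "'a set \<Rightarrow> 'b set \<Rightarrow> ('a \<times> 'b) set" where
  "kron_verts V1 V2 = V1 \<times> V2"

definition kron_adj :: "('a \<Rightarrow> 'a \<Rightarrow> bool) \<Rightarrow> ('b \<Rightarrow> 'b \<Rightarrow> bool) \<Rightarrow> ('a \<times> 'b) \<Rightarrow> ('a \<times> 'b) \<Rightarrow> bool" where
  "kron_adj E1 E2 u w \<longleftrightarrow> E1 (fst u) (fst w) \<and> E2 (snd u) (snd w)"

end

(*
  Write q = pt and N = q(m + n). Enumerate the q pairs (copy i, vertex x of G) by an index beta and
  give the m-part of copy i at x the labels of a block B(beta, False) of size m, the n-part those
  of a block B(beta, True) of size n. The neighbourhood of a vertex of tK_{m,n} (x) G is the other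
  part of its copy times N(x), so its label sum is deg(x) times a block sum: it suffices to
  partition {1..N} into such 2q blocks with equal sums.

  With H = N/2, m = 2a and n = 2a + 4d, the n-block is made of a + 2d - k mirror pairs
  {u, 2H + 1 - u} together with a set P(beta) of 2k numbers in {1..H}, and the m-block of a - k
  mirror pairs together with the mirror image of P(beta). Both sums equal (a + d)(2H + 1) exactly
  when P(beta) sums to (k - d)(2H + 1). Disjoint sets P(beta) with any sum in a certain range are
  the rows of a 2k x q array filled in boustrophedon order, and a suitable k exists as soon as
  4qd^2 + d <= 2qa^2, which is what condition (ii) amounts to.
*)

theory Submission
  imports Defs
begin

section \<open>Distance magic labellings from equal-sum blocks\<close>

definition equal_sum_blocks :: "nat \<Rightarrow> nat \<Rightarrow> nat \<Rightarrow> (nat \<Rightarrow> bool \<Rightarrow> nat set) \<Rightarrow> bool" where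
  "equal_sum_blocks q m n B \<longleftrightarrow>
     (\<forall>\<beta><q. \<forall>b. B \<beta> b \<subseteq> {1..q*(m+n)} \<and> card (B \<beta> b) = (if b then n else m)) \<and>
     (\<forall>\<beta><q. \<forall>\<beta>'<q. \<forall>b b'. (\<beta>, b) \<noteq> (\<beta>', b') \<longrightarrow> B \<beta> b \<inter> B \<beta>' b' = {}) \<and>
     (\<exists>c. \<forall>\<beta><q. \<forall>b. \<Sum>(B \<beta> b) = c)"

lemma tKmn_verts_eq_Sigma:
  "tKmn_verts t m n = {..<t} \<times> (SIGMA b:UNIV. {..<(if b then n else m)})"
  unfolding tKmn_verts_def by auto

lemma finite_tKmn_verts: "finite (tKmn_verts t m n)"
  unfolding tKmn_verts_eq_Sigma by (simp add: finite_SigmaI)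

lemma card_tKmn_verts: "card (tKmn_verts t m n) = t * (m + n)"
proof -
  have "card (SIGMA b:UNIV. {..<(if b then n else m)}) = m + n"
    by (subst card_SigmaI) (auto simp: UNIV_bool)
  then show ?thesis unfolding tKmn_verts_eq_Sigma by (simp add: card_cartesian_product)
qed

lemma nbhd_kron_tKmn:
  assumes "simple_graph V E" and "i < t" and "j < (if b then n else m)" and "x \<in> V"
  shows "nbhd (kron_verts (tKmn_verts t m n) V) (kron_adj (tKmn_adj t m n) E) ((i, b, j), x) =
         (\<lambda>(j', y). ((i, \<not> b, j'), y)) ` ({..<(if b then m else n)} \<times> nbhd V E x)"
  using assms
  by (fastforce simp: nbhd_def kron_verts_def kron_adj_def tKmn_adj_def tKmn_verts_def
      simple_graph_def image_iff)

lemma equal_sum_blocksD: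
  assumes "equal_sum_blocks q m n B" and "\<beta> < q"
  shows "B \<beta> b \<subseteq> {1..q*(m+n)}" and "card (B \<beta> b) = (if b then n else m)"
    and "\<beta>' < q \<Longrightarrow> (\<beta>, b) \<noteq> (\<beta>', b') \<Longrightarrow> B \<beta> b \<inter> B \<beta>' b' = {}"
  using assms unfolding equal_sum_blocks_def by blast+

definition block_label :: "(nat \<Rightarrow> bool \<Rightarrow> nat set) \<Rightarrow> nat \<times> bool \<times> nat \<Rightarrow> nat" where
  "block_label B = (\<lambda>(\<beta>, b, j). sorted_list_of_set (B \<beta> b) ! j)"

lemma bij_betw_block_label_block:
  assumes "equal_sum_blocks q m n B" and "\<beta> < q"
  shows "bij_betw (\<lambda>j. block_label B (\<beta>, b, j)) {..<(if b then n else m)} (B \<beta> b)"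
proof -
  have "finite (B \<beta> b)" using equal_sum_blocksD(1)[OF assms] finite_subset by blast
  then have "bij_betw ((!) (sorted_list_of_set (B \<beta> b))) {..<(if b then n else m)} (B \<beta> b)"
    using equal_sum_blocksD(2)[OF assms] by (intro bij_betw_nth) simp_all
  then show ?thesis unfolding block_label_def by simp
qed

lemma sum_block_label:
  assumes "equal_sum_blocks q m n B" and "\<beta> < q"
  shows "(\<Sum>j<(if b then n else m). block_label B (\<beta>, b, j)) = \<Sum>(B \<beta> b)"
  using sum.reindex_bij_betw[OF bij_betw_block_label_block[OF assms], where g = "\<lambda>l. l"] .

lemma bij_betw_block_label:
  assumes blocks: "equal_sum_blocks q m n B"
  shows "bij_betw (block_label B) (tKmn_verts q m n) {1..q*(m+n)}"
proof -
  have mem: "(\<beta>, b, j) \<in> tKmn_verts q m n \<longleftrightarrow> \<beta> < q \<and> j < (if b then n else m)" for \<beta> b j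
    unfolding tKmn_verts_def by simp
  have in_block: "block_label B (\<beta>, b, j) \<in> B \<beta> b" if "(\<beta>, b, j) \<in> tKmn_verts q m n" for \<beta> b j
    using bij_betw_apply[OF bij_betw_block_label_block[OF blocks]] that unfolding mem by blast
  have "inj_on (block_label B) (tKmn_verts q m n)"
  proof (rule inj_onI)
    fix u u' assume "u \<in> tKmn_verts q m n" "u' \<in> tKmn_verts q m n" "block_label B u = block_label B u'"
    moreover obtain \<beta> b j \<beta>' b' j' where "u = (\<beta>, b, j)" "u' = (\<beta>', b', j')"
      by (metis prod.collapse)
    ultimately have v: "(\<beta>, b, j) \<in> tKmn_verts q m n" and v': "(\<beta>', b', j') \<in> tKmn_verts q m n"
      and eq: "block_label B (\<beta>, b, j) = block_label B (\<beta>', b', j')" by simp_all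
    have "B \<beta> b \<inter> B \<beta>' b' \<noteq> {}" using in_block[OF v] in_block[OF v'] eq by auto
    then have "(\<beta>, b) = (\<beta>', b')" using equal_sum_blocksD(3)[OF blocks] v v' unfolding mem by blast
    moreover from this have "j = j'"
      using eq v v' bij_betw_imp_inj_on[OF bij_betw_block_label_block[OF blocks]]
      unfolding mem by (auto dest: inj_onD)
    ultimately show "u = u'" using \<open>u = (\<beta>, b, j)\<close> \<open>u' = (\<beta>', b', j')\<close> by simp
  qed
  moreover have "block_label B ` tKmn_verts q m n \<subseteq> {1..q*(m+n)}"
  proof clarify
    fix \<beta> b j assume "(\<beta>, b, j) \<in> tKmn_verts q m n"
    then show "block_label B (\<beta>, b, j) \<in> {1..q*(m+n)}"
      using in_block equal_sum_blocksD(1)[OF blocks] unfolding mem by blast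
  qed
  ultimately show ?thesis
    unfolding bij_betw_def
    by (simp add: card_image card_subset_eq card_tKmn_verts finite_tKmn_verts)
qed

lemma sum_nbhd_kron_tKmn:
  assumes "simple_graph V E" and "((i, b, j), x) \<in> kron_verts (tKmn_verts t m n) V"
  shows "(\<Sum>w\<in>nbhd (kron_verts (tKmn_verts t m n) V) (kron_adj (tKmn_adj t m n) E) ((i, b, j), x). h w)
       = (\<Sum>y\<in>nbhd V E x. \<Sum>j'<(if b then m else n). h ((i, \<not> b, j'), y))"
proof -
  define emb :: "nat \<times> 'a \<Rightarrow> (nat \<times> bool \<times> nat) \<times> 'a"
    where "emb = (\<lambda>(j', y). ((i, \<not> b, j'), y))"
  define other where "other = (if b then m else n)"
  have "i < t" "j < (if b then n else m)" "x \<in> V"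
    using assms(2) unfolding kron_verts_def tKmn_verts_def by auto
  from nbhd_kron_tKmn[OF assms(1) this]
  have nbhd_eq: "nbhd (kron_verts (tKmn_verts t m n) V) (kron_adj (tKmn_adj t m n) E) ((i, b, j), x)
      = emb ` ({..<other} \<times> nbhd V E x)"
    unfolding emb_def other_def .
  have "inj_on emb ({..<other} \<times> nbhd V E x)"
    unfolding emb_def by (auto simp: inj_on_def)
  then have "(\<Sum>w\<in>emb ` ({..<other} \<times> nbhd V E x). h w) = (\<Sum>z\<in>{..<other} \<times> nbhd V E x. h (emb z))"
    by (simp add: sum.reindex)
  also have "\<dots> = (\<Sum>(j', y)\<in>{..<other} \<times> nbhd V E x. h ((i, \<not> b, j'), y))"
    unfolding emb_def by (simp add: case_prod_beta)
  also have "\<dots> = (\<Sum>y\<in>nbhd V E x. \<Sum>j'<other. h ((i, \<not> b, j'), y))"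
    by (simp add: sum.cartesian_product[symmetric] sum.swap[of _ "{..<other}"])
  finally show ?thesis unfolding nbhd_eq other_def .
qed

lemma bij_betw_kron_tKmn_reindex:
  fixes idx :: "nat \<times> 'a \<Rightarrow> nat"
  assumes idx: "bij_betw idx ({..<t} \<times> V) {..<t*p}" and "finite V" and "card V = p"
  shows "bij_betw (\<lambda>((i, b, j), x). (idx (i, x), b, j))
           (kron_verts (tKmn_verts t m n) V) (tKmn_verts (t*p) m n)"
proof -
  define VV where "VV = kron_verts (tKmn_verts t m n) V"
  define g :: "(nat \<times> bool \<times> nat) \<times> 'a \<Rightarrow> nat \<times> bool \<times> nat"
    where "g = (\<lambda>((i, b, j), x). (idx (i, x), b, j))"
  have VV_mem: "((i, b, j), x) \<in> VV \<longleftrightarrow> (i, x) \<in> {..<t} \<times> V \<and> j < (if b then n else m)"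
    for i b j x
    unfolding VV_def kron_verts_def tKmn_verts_def by auto
  have "inj_on g VV"
  proof (rule inj_onI)
    fix w w' assume "w \<in> VV" "w' \<in> VV" "g w = g w'"
    moreover obtain i b j x i' b' j' x' where ws: "w = ((i, b, j), x)" "w' = ((i', b', j'), x')"
      by (metis prod.collapse)
    ultimately have "idx (i, x) = idx (i', x')" "b = b'" "j = j'"
      and "(i, x) \<in> {..<t} \<times> V" "(i', x') \<in> {..<t} \<times> V"
      by (simp_all add: g_def VV_mem)
    then show "w = w'" using inj_onD[OF bij_betw_imp_inj_on[OF idx]] ws by auto
  qed
  moreover have "g ` VV \<subseteq> tKmn_verts (t*p) m n"
  proof (rule image_subsetI)
    fix w assume "w \<in> VV"
    moreover obtain i b j x where "w = ((i, b, j), x)" by (metis prod.collapse)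
    ultimately show "g w \<in> tKmn_verts (t*p) m n"
      using bij_betw_apply[OF idx] unfolding g_def tKmn_verts_def by (auto simp: VV_mem)
  qed
  moreover have "finite VV" "card VV = t*p*(m+n)"
    unfolding VV_def kron_verts_def using finite_tKmn_verts assms(2,3)
    by (auto simp: card_cartesian_product card_tKmn_verts)
  ultimately show ?thesis
    unfolding bij_betw_def VV_def[symmetric] g_def[symmetric]
    by (simp add: card_image card_subset_eq card_tKmn_verts finite_tKmn_verts)
qed

lemma distance_magic_kron_tKmn:
  assumes "regular_graph V E" and "card V = p" and blocks: "equal_sum_blocks (t*p) m n B"
  shows "distance_magic (kron_verts (tKmn_verts t m n) V) (kron_adj (tKmn_adj t m n) E)"
proof -
  define VV where "VV = kron_verts (tKmn_verts t m n) V"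
  have simple: "simple_graph V E" and "\<exists>r. \<forall>x\<in>V. card (nbhd V E x) = r"
    using assms(1) unfolding regular_graph_def by auto
  then obtain r where deg: "\<And>x. x \<in> V \<Longrightarrow> card (nbhd V E x) = r" by blast
  have "finite V" using simple unfolding simple_graph_def by simp
  obtain c where B_sum: "\<And>\<beta> b. \<beta> < t*p \<Longrightarrow> \<Sum>(B \<beta> b) = c"
    using blocks unfolding equal_sum_blocks_def by auto
  obtain idx where idx: "bij_betw idx ({..<t} \<times> V) {..<t*p}"
    using finite_same_card_bij[of "{..<t} \<times> V" "{..<t*p}"] \<open>finite V\<close> assms(2)
    by (auto simp: card_cartesian_product)
  define f where "f = block_label B \<circ> (\<lambda>((i, b, j), x). (idx (i, x), b, j))"
  have "card VV = t*p*(m+n)"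
    unfolding VV_def kron_verts_def using assms(2) by (simp add: card_cartesian_product card_tKmn_verts)
  then have f_bij: "bij_betw f VV {1..card VV}"
    unfolding f_def VV_def
    using bij_betw_kron_tKmn_reindex[OF idx \<open>finite V\<close> assms(2)] bij_betw_block_label[OF blocks]
    by (auto intro: bij_betw_trans)
  have "(\<Sum>w\<in>nbhd VV (kron_adj (tKmn_adj t m n) E) ((i, b, j), x). f w) = r * c"
    if "((i, b, j), x) \<in> VV" for i b j x
  proof -
    have "i < t" "x \<in> V" using that unfolding VV_def kron_verts_def tKmn_verts_def by auto
    have "(\<Sum>w\<in>nbhd VV (kron_adj (tKmn_adj t m n) E) ((i, b, j), x). f w)
        = (\<Sum>y\<in>nbhd V E x. \<Sum>j'<(if b then m else n). f ((i, \<not> b, j'), y))"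
      using sum_nbhd_kron_tKmn[OF simple that[unfolded VV_def]] unfolding VV_def .
    also have "\<dots> = (\<Sum>y\<in>nbhd V E x. c)"
    proof (rule sum.cong[OF refl])
      fix y assume "y \<in> nbhd V E x"
      then have "idx (i, y) < t*p"
        using bij_betw_apply[OF idx] \<open>i < t\<close> unfolding nbhd_def by auto
      from sum_block_label[OF blocks this, of "\<not> b"] B_sum[OF this, of "\<not> b"]
      show "(\<Sum>j'<(if b then m else n). f ((i, \<not> b, j'), y)) = c"
        unfolding f_def by (cases b) simp_all
    qed
    also have "\<dots> = r * c" using deg[OF \<open>x \<in> V\<close>] by simp
    finally show ?thesis .
  qed
  then show ?thesis
    unfolding distance_magic_def VV_def[symmetric] using f_bij by (metis prod.collapse)
qed

section \<open>Disjoint sets with prescribed equal sums\<close>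

lemma sum_lessThan_double: "(\<Sum>r<2*k. r) + k = 2*k*(k::nat)"
  by (induction k) (simp_all add: algebra_simps)

lemma sum_alternating_reflection:
  fixes q \<beta> :: nat
  assumes "\<beta> < q"
  shows "(\<Sum>r<2*k. if even r then \<beta> + 1 else q - \<beta>) = k * (q + 1)"
  using assms by (induction k) simp_all

text \<open>The rows of the 2k \<times> q array whose column r holds base r + 1, ..., base r + q, read upwards
  in even and downwards in odd columns: two consecutive columns contribute q + 1 to every row.\<close>

definition boustrophedon_row :: "nat \<Rightarrow> (nat \<Rightarrow> nat) \<Rightarrow> nat \<Rightarrow> nat \<Rightarrow> nat set" where
  "boustrophedon_row q base k \<beta> = (\<lambda>r. base r + (if even r then \<beta> + 1 else q - \<beta>)) ` {..<2*k}"

lemma boustrophedon_rows: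
  fixes q k :: nat and base :: "nat \<Rightarrow> nat"
  assumes gaps: "\<forall>r r'. r < r' \<longrightarrow> base r + q \<le> base r'"
    and "\<beta> < q"
  defines "row \<equiv> boustrophedon_row q base k"
  shows "row \<beta> \<subseteq> (\<Union>r<2*k. {base r <.. base r + q})"
    and "card (row \<beta>) = 2*k"
    and "\<Sum>(row \<beta>) = (\<Sum>r<2*k. base r) + k*(q + 1)"
    and "\<beta>' < q \<Longrightarrow> \<beta> \<noteq> \<beta>' \<Longrightarrow> row \<beta> \<inter> row \<beta>' = {}"
proof -
  define v where "v r \<beta> = base r + (if even r then \<beta> + 1 else q - \<beta>)" for r \<beta>
  have row_eq: "row \<beta> = (\<lambda>r. v r \<beta>) ` {..<2*k}" for \<beta>
    unfolding row_def boustrophedon_row_def v_def ..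
  have v_less: "v r \<beta> < v r' \<beta>'" if "r < r'" "\<beta> < q" "\<beta>' < q" for r r' \<beta> \<beta>'
  proof -
    have "base r + q \<le> base r'" using gaps that(1) by blast
    then show ?thesis using that(2,3) unfolding v_def by auto
  qed
  have v_inj: "inj_on (\<lambda>r. v r \<beta>) {..<2*k}"
    by (rule inj_onI) (metis linorder_neqE_nat order_less_irrefl \<open>\<beta> < q\<close> v_less)
  show "row \<beta> \<subseteq> (\<Union>r<2*k. {base r <.. base r + q})"
  proof
    fix y assume "y \<in> row \<beta>"
    then obtain r where "r < 2*k" "y = v r \<beta>" unfolding row_eq by auto
    then show "y \<in> (\<Union>r<2*k. {base r <.. base r + q})"
      using \<open>\<beta> < q\<close> unfolding v_def by (intro UN_I[of r]) auto
  qed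
  show "card (row \<beta>) = 2*k"
    unfolding row_eq using card_image[OF v_inj] by simp
  have "\<Sum>(row \<beta>) = (\<Sum>r<2*k. v r \<beta>)"
    unfolding row_eq by (simp add: sum.reindex[OF v_inj])
  also have "\<dots> = (\<Sum>r<2*k. base r) + k*(q + 1)"
    unfolding v_def using sum_alternating_reflection[OF \<open>\<beta> < q\<close>, of k] by (simp add: sum.distrib)
  finally show "\<Sum>(row \<beta>) = (\<Sum>r<2*k. base r) + k*(q + 1)" .
  assume "\<beta>' < q" "\<beta> \<noteq> \<beta>'"
  show "row \<beta> \<inter> row \<beta>' = {}"
  proof (rule ccontr)
    assume "row \<beta> \<inter> row \<beta>' \<noteq> {}"
    then obtain r r' where r: "v r \<beta> = v r' \<beta>'" unfolding row_eq by auto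
    then have "r = r'" using v_less[of r r' \<beta> \<beta>'] v_less[of r' r \<beta>' \<beta>] \<open>\<beta> < q\<close> \<open>\<beta>' < q\<close>
      by (metis linorder_neqE_nat order_less_irrefl)
    then show False using r \<open>\<beta> < q\<close> \<open>\<beta>' < q\<close> \<open>\<beta> \<noteq> \<beta>'\<close> unfolding v_def by (auto split: if_splits)
  qed
qed

text \<open>Column offsets q apart with the last E columns raised by one more: with the extra shift D
  they raise every row sum by 2kD + E, an arbitrary excess.\<close>

definition shifted_base :: "nat \<Rightarrow> nat \<Rightarrow> nat \<Rightarrow> nat \<Rightarrow> nat \<Rightarrow> nat" where
  "shifted_base q k D E r = r*q + D + (if 2*k - E \<le> r then 1 else 0)"

lemma shifted_base_gaps: "\<forall>r r'. r < r' \<longrightarrow> shifted_base q k D E r + q \<le> shifted_base q k D E r'"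
proof (intro allI impI)
  fix r r' :: nat assume "r < r'"
  then have "r*q + q \<le> r'*q" by (metis Suc_leI mult_Suc mult_le_mono1 add.commute)
  then show "shifted_base q k D E r + q \<le> shifted_base q k D E r'"
    unfolding shifted_base_def using \<open>r < r'\<close> by auto
qed

lemma shifted_base_top:
  assumes "r < 2*k" and "2*k*D + E \<le> 2*k*G"
  shows "shifted_base q k D E r + q \<le> 2*k*q + G"
proof -
  have "r*q + q \<le> 2*k*q" using assms(1) by (metis Suc_leI mult_Suc mult_le_mono1 add.commute)
  moreover have "D + (if 2*k - E \<le> r then 1 else 0) \<le> G"
  proof (cases "2*k - E \<le> r")
    case True
    then have "2*k*D < 2*k*G" using assms by linarith
    then show ?thesis using True by simp
  next
    case False
    have "2*k*D \<le> 2*k*G" using assms(2) by linarith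
    then show ?thesis using False assms(1) by simp
  qed
  ultimately show ?thesis unfolding shifted_base_def by linarith
qed

lemma sum_shifted_base:
  assumes "E \<le> 2*k"
  shows "(\<Sum>r<2*k. shifted_base q k D E r) + k*(q + 1) = 2*q*k*k + k + 2*k*D + E"
proof -
  have "{..<2*k} \<inter> {r. 2*k - E \<le> r} = {2*k - E..<2*k}" by auto
  then have "(\<Sum>r<2*k. if 2*k - E \<le> r then 1 else 0::nat) = E"
    using assms by (simp add: sum.If_cases)
  then have "(\<Sum>r<2*k. shifted_base q k D E r) = q*(\<Sum>r<2*k. r) + 2*k*D + E"
    unfolding shifted_base_def by (simp add: sum.distrib sum_distrib_left mult.commute)
  moreover have "q*((\<Sum>r<2*k. r) + k) = q*(2*k*k)" using sum_lessThan_double[of k] by simp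
  then have "q*(\<Sum>r<2*k. r) + k*(q + 1) = 2*q*k*k + k" by (simp add: algebra_simps)
  ultimately show ?thesis by linarith
qed

lemma ex_disjoint_equal_sum_subsets:
  fixes q k H s :: nat
  assumes room: "2*k*q \<le> H" and low: "2*q*k*k + k \<le> s" and high: "s + 2*q*k*k \<le> 2*k*H + k"
  shows "\<exists>P. (\<forall>\<beta><q. P \<beta> \<subseteq> {1..H} \<and> card (P \<beta>) = 2*k \<and> \<Sum>(P \<beta>) = s) \<and>
             (\<forall>\<beta><q. \<forall>\<beta>'<q. \<beta> \<noteq> \<beta>' \<longrightarrow> P \<beta> \<inter> P \<beta>' = {})"
proof (cases "k = 0")
  case True
  then show ?thesis using low high by (intro exI[of _ "\<lambda>_. {}"]) auto
next
  case False
  define X where "X = s - (2*q*k*k + k)"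
  define D where "D = X div (2*k)"
  define E where "E = X mod (2*k)"
  have X: "X = 2*k*D + E" unfolding D_def E_def by simp
  have "E < 2*k" unfolding E_def using False by simp
  have X_le: "2*k*D + E \<le> 2*k*(H - 2*k*q)"
    using low high room X unfolding X_def by (simp add: diff_mult_distrib2 algebra_simps)
  define base where "base = shifted_base q k D E"
  have rows_sum: "(\<Sum>r<2*k. base r) + k*(q + 1) = s"
    using sum_shifted_base[of E k q D] \<open>E < 2*k\<close> X low unfolding base_def X_def by simp
  have gaps: "\<forall>r r'. r < r' \<longrightarrow> base r + q \<le> base r'"
    unfolding base_def by (rule shifted_base_gaps)
  note rows = boustrophedon_rows[where base = base and k = k, OF gaps]
  show ?thesis
  proof (intro exI[of _ "boustrophedon_row q base k"] conjI allI impI)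
    fix \<beta> assume \<beta>: "\<beta> < q"
    show "boustrophedon_row q base k \<beta> \<subseteq> {1..H}"
    proof
      fix y assume "y \<in> boustrophedon_row q base k \<beta>"
      then obtain r where "r < 2*k" "base r < y" "y \<le> base r + q"
        using rows(1)[OF \<beta>] by auto
      then show "y \<in> {1..H}"
        using shifted_base_top[OF _ X_le, of r q] room unfolding base_def by simp
    qed
    show "card (boustrophedon_row q base k \<beta>) = 2*k" using rows(2)[OF \<beta>] .
    show "\<Sum>(boustrophedon_row q base k \<beta>) = s" using rows(3)[OF \<beta>] rows_sum by simp
  next
    fix \<beta> \<beta>' assume "\<beta> < q" "\<beta>' < q" "\<beta> \<noteq> \<beta>'"
    then show "boustrophedon_row q base k \<beta> \<inter> boustrophedon_row q base k \<beta>' = {}"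
      by (rule rows(4))
  qed
qed

lemma transfer_bound_at_maximum:
  fixes q a d k :: nat
  assumes "k + 1 \<le> a" and "k \<noteq> 0" and "d \<noteq> 0"
    and overflow: "d*(4*q*(a + d) + 1) < 2*q*(k + 1)*(k + 1)"
  shows "2*q*k*k + k + d*(4*q*(a + d) + 1) \<le> k*(4*q*(a + d) + 1)"
proof -
  have "2*q \<le> 4*q*(k*d)" using assms(2,3) by simp
  have "2*q*k*k + k + d*(4*q*(a + d) + 1) < 2*q*k*k + k + 2*q*(k + 1)*(k + 1)"
    using overflow by simp
  also have "\<dots> = 4*q*k*(k + 1) + 2*q + k" by (simp add: algebra_simps)
  also have "\<dots> \<le> 4*q*k*(k + 1) + 4*q*(k*d) + k" using \<open>2*q \<le> 4*q*(k*d)\<close> by simp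
  also have "\<dots> = 4*q*k*(k + 1 + d) + k" by (simp add: algebra_simps)
  also have "\<dots> \<le> 4*q*k*(a + d) + k"
    using \<open>k + 1 \<le> a\<close> by (intro add_right_mono mult_le_mono2) simp
  also have "\<dots> = k*(4*q*(a + d) + 1)" by (simp add: algebra_simps)
  finally show ?thesis by simp
qed

text \<open>2k is the size of the sets P \<beta> that the n-blocks keep and the m-blocks mirror in
  equal_sum_blocks_of_low_sets; the two inequalities are what ex_disjoint_equal_sum_subsets
  needs for the target sum (k - d)(2H + 1). The greatest k \<le> a allowed by the second one works.\<close>

lemma ex_transfer_size:
  fixes q a d :: nat
  assumes q: "q \<ge> 1" and hyp: "4*q*d*d + d \<le> 2*q*a*a"
  defines "A \<equiv> 4*q*(a + d) + 1"
  shows "\<exists>k. k \<le> a \<and> 2*q*k*k + k + d*A \<le> k*A \<and> 2*q*k*k \<le> d*A"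
proof -
  define fits where "fits k \<longleftrightarrow> k \<le> a \<and> 2*q*k*k \<le> d*A" for k
  obtain k where k: "fits k" and k_max: "\<And>k'. fits k' \<Longrightarrow> k' \<le> k"
    using Nat.ex_has_greatest_nat[of fits 0 a] unfolding fits_def by auto
  have "2*q*k*k + k + d*A \<le> k*A"
  proof (cases "k = a \<or> d = 0")
    case True
    then show ?thesis using hyp k q unfolding A_def fits_def by (auto simp: algebra_simps)
  next
    case False
    then have "\<not> fits (k + 1)" using k_max by fastforce
    then have overflow: "d*A < 2*q*(k + 1)*(k + 1)" using k False unfolding fits_def by auto
    have "k \<noteq> 0"
    proof
      assume "k = 0"
      have "q \<le> q*(a + d)" using False by simp
      then have "2*q < A" unfolding A_def mult.assoc by linarith
      moreover have "A \<le> d*A" using False by simp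
      moreover have "d*A < 2*q" using overflow \<open>k = 0\<close> by simp
      ultimately show False by linarith
    qed
    moreover have "k + 1 \<le> a" using k False unfolding fits_def by simp
    ultimately show ?thesis
      using transfer_bound_at_maximum overflow False unfolding A_def by blast
  qed
  then show ?thesis using k unfolding fits_def by blast
qed

section \<open>Equal-sum blocks from mirror pairs\<close>

definition mirror_block :: "nat \<Rightarrow> nat set \<Rightarrow> nat set \<Rightarrow> nat set" where
  "mirror_block H S L = S \<union> (\<lambda>u. 2*H + 1 - u) ` L"

lemma mirror_range:
  fixes H :: nat
  assumes "L \<subseteq> {1..H}"
  shows "inj_on (\<lambda>u. 2*H + 1 - u) L" and "(\<lambda>u. 2*H + 1 - u) ` L \<subseteq> {H+1..2*H}"
proof -
  have bound: "1 \<le> u \<and> u \<le> H" if "u \<in> L" for u using assms that by auto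
  show "inj_on (\<lambda>u. 2*H + 1 - u) L"
  proof (rule inj_onI)
    fix u u' assume "u \<in> L" "u' \<in> L" "2*H + 1 - u = 2*H + 1 - u'"
    then show "u = u'" using bound[of u] bound[of u'] by linarith
  qed
  show "(\<lambda>u. 2*H + 1 - u) ` L \<subseteq> {H+1..2*H}" using bound by fastforce
qed

lemma mirror_block_subset:
  assumes "S \<subseteq> {1..H}" and "L \<subseteq> {1..H}"
  shows "mirror_block H S L \<subseteq> {1..2*H}"
  using assms mirror_range(2)[OF assms(2)] unfolding mirror_block_def by auto

lemma mirror_blocks_disjoint:
  assumes "S \<subseteq> {1..H}" "L \<subseteq> {1..H}" "S' \<subseteq> {1..H}" "L' \<subseteq> {1..H}"
    and "S \<inter> S' = {}" and "L \<inter> L' = {}"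
  shows "mirror_block H S L \<inter> mirror_block H S' L' = {}"
proof -
  have "inj_on (\<lambda>u. 2*H + 1 - u) (L \<union> L')" using assms(2,4) by (intro mirror_range(1)) simp
  then have "(\<lambda>u. 2*H + 1 - u) ` L \<inter> (\<lambda>u. 2*H + 1 - u) ` L' = {}"
    using inj_on_image_Int[of _ "L \<union> L'" L L'] assms(6) by (metis Un_upper1 Un_upper2 image_empty)
  moreover have "S \<inter> (\<lambda>u. 2*H + 1 - u) ` L' = {}" "S' \<inter> (\<lambda>u. 2*H + 1 - u) ` L = {}"
    using assms(1,3) mirror_range(2)[OF assms(4)] mirror_range(2)[OF assms(2)] by fastforce+
  ultimately show ?thesis using assms(5) unfolding mirror_block_def by blast
qed

lemma card_mirror_block:
  assumes "S \<subseteq> {1..H}" and "L \<subseteq> {1..H}"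
  shows "card (mirror_block H S L) = card S + card L"
proof -
  have "inj_on (\<lambda>u. 2*H + 1 - u) L" using mirror_range(1)[OF assms(2)] .
  moreover have "S \<inter> (\<lambda>u. 2*H + 1 - u) ` L = {}" using assms mirror_range(2)[OF assms(2)] by fastforce
  moreover have "finite S" "finite L" using assms finite_subset by auto
  ultimately show ?thesis unfolding mirror_block_def by (simp add: card_Un_disjoint card_image)
qed

lemma sum_mirror_block:
  assumes "S \<subseteq> {1..H}" and "L \<subseteq> {1..H}"
  shows "\<Sum>(mirror_block H S L) + \<Sum>L = \<Sum>S + card L * (2*H + 1)"
proof -
  have inj: "inj_on (\<lambda>u. 2*H + 1 - u) L" using mirror_range(1)[OF assms(2)] .
  have "S \<inter> (\<lambda>u. 2*H + 1 - u) ` L = {}" using assms mirror_range(2)[OF assms(2)] by fastforce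
  moreover have fin: "finite S" "finite L" using assms finite_subset by auto
  ultimately have "\<Sum>(mirror_block H S L) = \<Sum>S + (\<Sum>u\<in>L. 2*H + 1 - u)"
    unfolding mirror_block_def using sum.reindex[OF inj, of "\<lambda>x. x"] by (simp add: sum.union_disjoint)
  moreover have "(\<Sum>u\<in>L. 2*H + 1 - u) + \<Sum>L = card L * (2*H + 1)"
  proof -
    have "(\<Sum>u\<in>L. 2*H + 1 - u) + \<Sum>L = (\<Sum>u\<in>L. (2*H + 1 - u) + u)"
      by (simp add: sum.distrib)
    also have "\<dots> = (\<Sum>u\<in>L. 2*H + 1)" using assms(2) by (intro sum.cong) auto
    finally show ?thesis by simp
  qed
  ultimately show ?thesis by linarith
qed

lemma mirror_block_keeping:
  assumes "P \<subseteq> {1..H}" and "Q \<subseteq> {1..H}" and "P \<inter> Q = {}"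
  shows "card (mirror_block H (P \<union> Q) Q) = card P + 2*card Q"
    and "\<Sum>(mirror_block H (P \<union> Q) Q) = \<Sum>P + card Q * (2*H + 1)"
proof -
  have fin: "finite P" "finite Q" using assms(1,2) finite_subset by auto
  have "P \<union> Q \<subseteq> {1..H}" using assms(1,2) by simp
  from card_mirror_block[OF this assms(2)] sum_mirror_block[OF this assms(2)]
  show "card (mirror_block H (P \<union> Q) Q) = card P + 2*card Q"
    and "\<Sum>(mirror_block H (P \<union> Q) Q) = \<Sum>P + card Q * (2*H + 1)"
    using card_Un_disjoint[OF fin assms(3)] sum.union_disjoint[OF fin assms(3), of "\<lambda>x. x"]
    by simp_all
qed

lemma mirror_block_mirroring:
  assumes "P \<subseteq> {1..H}" and "Q \<subseteq> {1..H}" and "P \<inter> Q = {}"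
  shows "card (mirror_block H Q (P \<union> Q)) = card P + 2*card Q"
    and "\<Sum>(mirror_block H Q (P \<union> Q)) + \<Sum>P = (card P + card Q) * (2*H + 1)"
proof -
  have fin: "finite P" "finite Q" using assms(1,2) finite_subset by auto
  have "P \<union> Q \<subseteq> {1..H}" using assms(1,2) by simp
  from card_mirror_block[OF assms(2) this] sum_mirror_block[OF assms(2) this]
  show "card (mirror_block H Q (P \<union> Q)) = card P + 2*card Q"
    and "\<Sum>(mirror_block H Q (P \<union> Q)) + \<Sum>P = (card P + card Q) * (2*H + 1)"
    using card_Un_disjoint[OF fin assms(3)] sum.union_disjoint[OF fin assms(3), of "\<lambda>x. x"]
    by simp_all
qed

lemma mirror_pair_blocks:
  fixes H a d k :: nat
  assumes sets: "P \<subseteq> {1..H}" "QT \<subseteq> {1..H}" "QF \<subseteq> {1..H}" "P \<inter> QT = {}" "P \<inter> QF = {}"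
    and cards: "card P = 2*k" "card QT + k = a + 2*d" "card QF + k = a"
    and P_sum: "\<Sum>P + d*(2*H + 1) = k*(2*H + 1)"
  shows "card (mirror_block H (P \<union> QT) QT) = 2*a + 4*d"
    and "card (mirror_block H QF (P \<union> QF)) = 2*a"
    and "\<Sum>(mirror_block H (P \<union> QT) QT) = (a + d)*(2*H + 1)"
    and "\<Sum>(mirror_block H QF (P \<union> QF)) = (a + d)*(2*H + 1)"
proof -
  define A where "A = 2*H + 1"
  note keep = mirror_block_keeping[OF sets(1,2,4), folded A_def]
  note mirror = mirror_block_mirroring[OF sets(1,3,5), folded A_def]
  show "card (mirror_block H (P \<union> QT) QT) = 2*a + 4*d"
    and "card (mirror_block H QF (P \<union> QF)) = 2*a"
    using keep(1) mirror(1) cards by simp_all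
  have "(card QT + k)*A = (a + 2*d)*A" using cards(2) by simp
  then have "card QT * A + k*A = (a + d)*A + d*A" by (simp add: algebra_simps)
  then show "\<Sum>(mirror_block H (P \<union> QT) QT) = (a + d)*(2*H + 1)"
    using keep(2) P_sum unfolding A_def[symmetric] by linarith
  have "(card P + card QF)*A = (a + k)*A" using cards(1,3) by simp
  then have "(card P + card QF)*A + d*A = (a + d)*A + k*A" by (simp add: algebra_simps)
  then show "\<Sum>(mirror_block H QF (P \<union> QF)) = (a + d)*(2*H + 1)"
    using mirror(2) P_sum unfolding A_def[symmetric] by linarith
qed

lemma ex_disjoint_sized_subsets:
  assumes "finite C" and "card C = q*(x + y)"
  shows "\<exists>Q. (\<forall>\<beta><q. \<forall>b. Q \<beta> b \<subseteq> C \<and> card (Q \<beta> b) = (if b then y else x)) \<and>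
             (\<forall>\<beta><q. \<forall>\<beta>'<q. \<forall>b b'. (\<beta>, b) \<noteq> (\<beta>', b') \<longrightarrow> Q \<beta> b \<inter> Q \<beta>' b' = {})"
proof -
  obtain \<pi> where \<pi>: "bij_betw \<pi> (tKmn_verts q x y) C"
    using finite_same_card_bij[OF finite_tKmn_verts assms(1)] assms(2) card_tKmn_verts by metis
  define J where "J \<beta> b = {(\<beta>, b, j) | j. j < (if b then y else x)}" for \<beta> :: nat and b
  define Q where "Q \<beta> b = \<pi> ` J \<beta> b" for \<beta> b
  have sub: "J \<beta> b \<subseteq> tKmn_verts q x y" if "\<beta> < q" for \<beta> b
    using that unfolding J_def tKmn_verts_def by auto
  have inj: "inj_on \<pi> (tKmn_verts q x y)" using \<pi> by (rule bij_betw_imp_inj_on)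
  show ?thesis
  proof (intro exI[of _ Q] conjI allI impI)
    fix \<beta> :: nat and b :: bool assume "\<beta> < q"
    show "Q \<beta> b \<subseteq> C" unfolding Q_def using sub[OF \<open>\<beta> < q\<close>] bij_betw_imp_surj_on[OF \<pi>] by blast
    have "J \<beta> b = (\<lambda>j. (\<beta>, b, j)) ` {..<(if b then y else x)}"
      unfolding J_def by auto
    then have "card (J \<beta> b) = (if b then y else x)"
      by (simp add: card_image inj_on_def)
    then show "card (Q \<beta> b) = (if b then y else x)"
      unfolding Q_def using card_image[OF inj_on_subset[OF inj sub[OF \<open>\<beta> < q\<close>]]] by simp
  next
    fix \<beta> \<beta>' :: nat and b b' :: bool assume "\<beta> < q" "\<beta>' < q" "(\<beta>, b) \<noteq> (\<beta>', b')"
    then have "J \<beta> b \<inter> J \<beta>' b' = {}" unfolding J_def by auto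
    then show "Q \<beta> b \<inter> Q \<beta>' b' = {}"
      unfolding Q_def using inj_on_image_Int[OF inj sub[OF \<open>\<beta> < q\<close>] sub[OF \<open>\<beta>' < q\<close>]]
      by (metis image_empty)
  qed
qed

lemma ex_disjoint_sized_subsets_of_complement:
  fixes P :: "nat \<Rightarrow> nat set"
  assumes P: "\<And>\<beta>. \<beta> < q \<Longrightarrow> P \<beta> \<subseteq> {1..H} \<and> card (P \<beta>) = c"
    and P_disj: "\<And>\<beta> \<beta>'. \<beta> < q \<Longrightarrow> \<beta>' < q \<Longrightarrow> \<beta> \<noteq> \<beta>' \<Longrightarrow> P \<beta> \<inter> P \<beta>' = {}"
    and H: "H = q*(c + x + y)"
  shows "\<exists>Q. (\<forall>\<beta><q. \<forall>b. Q \<beta> b \<subseteq> {1..H} - (\<Union>\<beta><q. P \<beta>) \<and> card (Q \<beta> b) = (if b then y else x)) \<and>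
             (\<forall>\<beta><q. \<forall>\<beta>'<q. \<forall>b b'. (\<beta>, b) \<noteq> (\<beta>', b') \<longrightarrow> Q \<beta> b \<inter> Q \<beta>' b' = {})"
proof (rule ex_disjoint_sized_subsets)
  have "card (\<Union>\<beta><q. P \<beta>) = q*c"
    using P P_disj by (subst card_UN_disjoint) (auto intro: finite_subset)
  moreover have "(\<Union>\<beta><q. P \<beta>) \<subseteq> {1..H}" using P by blast
  ultimately show "card ({1..H} - (\<Union>\<beta><q. P \<beta>)) = q*(x + y)"
    unfolding H by (simp add: card_Diff_subset finite_subset algebra_simps)
qed simp

lemma equal_sum_blocks_of_low_sets:
  fixes q a d k H :: nat and P :: "nat \<Rightarrow> nat set"
  assumes H: "H = q*(2*a + 2*d)" and "k \<le> a"
    and P: "\<And>\<beta>. \<beta> < q \<Longrightarrow> P \<beta> \<subseteq> {1..H} \<and> card (P \<beta>) = 2*k \<and> \<Sum>(P \<beta>) + d*(2*H + 1) = k*(2*H + 1)"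
    and P_disj: "\<And>\<beta> \<beta>'. \<beta> < q \<Longrightarrow> \<beta>' < q \<Longrightarrow> \<beta> \<noteq> \<beta>' \<Longrightarrow> P \<beta> \<inter> P \<beta>' = {}"
  shows "\<exists>B. equal_sum_blocks q (2*a) (2*a + 4*d) B"
proof -
  obtain m' where m': "a = k + m'" using \<open>k \<le> a\<close> le_Suc_ex by blast
  define n' where "n' = m' + 2*d"
  have n': "a + 2*d = k + n'" unfolding n'_def m' by simp
  define C where "C = {1..H} - (\<Union>\<beta><q. P \<beta>)"
  have P_card: "\<beta> < q \<Longrightarrow> P \<beta> \<subseteq> {1..H} \<and> card (P \<beta>) = 2*k" for \<beta> using P by blast
  have "H = q*(2*k + m' + n')" unfolding H n'_def m' by (simp add: algebra_simps)
  from ex_disjoint_sized_subsets_of_complement[where P = P and c = "2*k" and x = m' and y = n',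
      OF P_card P_disj this, folded C_def]
  obtain Q
    where "\<forall>\<beta><q. \<forall>b. Q \<beta> b \<subseteq> C \<and> card (Q \<beta> b) = (if b then n' else m')"
      and "\<forall>\<beta><q. \<forall>\<beta>'<q. \<forall>b b'. (\<beta>, b) \<noteq> (\<beta>', b') \<longrightarrow> Q \<beta> b \<inter> Q \<beta>' b' = {}"
    by blast
  then have Q: "\<And>\<beta> b. \<beta> < q \<Longrightarrow> Q \<beta> b \<subseteq> C \<and> card (Q \<beta> b) = (if b then n' else m')"
    and Q_disj: "\<And>\<beta> \<beta>' b b'. \<beta> < q \<Longrightarrow> \<beta>' < q \<Longrightarrow> (\<beta>, b) \<noteq> (\<beta>', b') \<Longrightarrow> Q \<beta> b \<inter> Q \<beta>' b' = {}"
    by simp_all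
  have PQ: "P \<beta> \<inter> Q \<beta>' b = {}" if "\<beta> < q" "\<beta>' < q" for \<beta> \<beta>' b
    using Q[OF that(2)] that(1) unfolding C_def by blast
  define S where "S \<beta> b = (if b then P \<beta> \<union> Q \<beta> b else Q \<beta> b)" for \<beta> b
  define L where "L \<beta> b = (if b then Q \<beta> b else P \<beta> \<union> Q \<beta> b)" for \<beta> b
  define B where "B \<beta> b = mirror_block H (S \<beta> b) (L \<beta> b)" for \<beta> b
  have SL: "S \<beta> b \<subseteq> {1..H}" "L \<beta> b \<subseteq> {1..H}" if "\<beta> < q" for \<beta> b
    using P[OF that] Q[OF that] unfolding S_def L_def C_def by auto
  have "card (B \<beta> b) = (if b then 2*a + 4*d else 2*a) \<and> \<Sum>(B \<beta> b) = (a + d)*(2*H + 1)"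
    if "\<beta> < q" for \<beta> b
  proof -
    have sets: "P \<beta> \<subseteq> {1..H}" "Q \<beta> True \<subseteq> {1..H}" "Q \<beta> False \<subseteq> {1..H}"
      "P \<beta> \<inter> Q \<beta> True = {}" "P \<beta> \<inter> Q \<beta> False = {}"
      using P[OF that] Q[OF that] PQ[OF that that] unfolding C_def by auto
    have cards: "card (P \<beta>) = 2*k" "card (Q \<beta> True) + k = a + 2*d" "card (Q \<beta> False) + k = a"
      and P_sum: "\<Sum>(P \<beta>) + d*(2*H + 1) = k*(2*H + 1)"
      using P[OF that] Q[OF that] m' n' by simp_all
    from mirror_pair_blocks[OF sets cards P_sum]
    show ?thesis unfolding B_def S_def L_def by (cases b) simp_all
  qed
  moreover have "B \<beta> b \<subseteq> {1..q*(2*a + (2*a + 4*d))}" if "\<beta> < q" for \<beta> b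
    using mirror_block_subset[OF SL[OF that]] unfolding B_def H by (simp add: algebra_simps)
  moreover have "B \<beta> b \<inter> B \<beta>' b' = {}" if "\<beta> < q" "\<beta>' < q" "(\<beta>, b) \<noteq> (\<beta>', b')" for \<beta> \<beta>' b b'
  proof -
    have "S \<beta> b \<inter> S \<beta>' b' = {}" "L \<beta> b \<inter> L \<beta>' b' = {}"
      using Q_disj[OF that] PQ[OF that(1,2), of b'] PQ[OF that(2,1), of b] P_disj[OF that(1,2)] that(3)
      unfolding S_def L_def by (auto split: if_splits simp: disjoint_iff)
    then show ?thesis unfolding B_def using mirror_blocks_disjoint SL that(1,2) by metis
  qed
  ultimately show ?thesis unfolding equal_sum_blocks_def by (intro exI[of _ B]) auto
qed

lemma ex_equal_sum_blocks:
  fixes q a d :: nat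
  assumes "q \<ge> 1" and "4*q*d*d + d \<le> 2*q*a*a"
  shows "\<exists>B. equal_sum_blocks q (2*a) (2*a + 4*d) B"
proof -
  define H where "H = q*(2*a + 2*d)"
  define A where "A = 2*H + 1"
  have "4*q*(a + d) + 1 = A" unfolding A_def H_def by (simp add: algebra_simps)
  then obtain k where "k \<le> a"
    and below: "2*q*k*k + k + d*A \<le> k*A" and above: "2*q*k*k \<le> d*A"
    using ex_transfer_size[OF assms] by auto
  have "q*(2*k) \<le> q*(2*a + 2*d)" using \<open>k \<le> a\<close> by (intro mult_le_mono2) simp
  then have room: "2*k*q \<le> H" unfolding H_def by (simp add: mult.commute)
  have low: "2*q*k*k + k \<le> k*A - d*A" using below by simp
  have "k*A = 2*k*H + k" unfolding A_def by (simp add: algebra_simps)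
  then have high: "k*A - d*A + 2*q*k*k \<le> 2*k*H + k" using above below by linarith
  obtain P where
    P: "\<forall>\<beta><q. P \<beta> \<subseteq> {1..H} \<and> card (P \<beta>) = 2*k \<and> \<Sum>(P \<beta>) = k*A - d*A"
    and P_disj: "\<forall>\<beta><q. \<forall>\<beta>'<q. \<beta> \<noteq> \<beta>' \<longrightarrow> P \<beta> \<inter> P \<beta>' = {}"
    using ex_disjoint_equal_sum_subsets[OF room low high] by blast
  have "d*A \<le> k*A" using below by linarith
  show ?thesis
  proof (rule equal_sum_blocks_of_low_sets[OF H_def \<open>k \<le> a\<close>, of P])
    fix \<beta> assume "\<beta> < q"
    then show "P \<beta> \<subseteq> {1..H} \<and> card (P \<beta>) = 2*k \<and> \<Sum>(P \<beta>) + d*(2*H + 1) = k*(2*H + 1)"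
      using P \<open>d*A \<le> k*A\<close> unfolding A_def by auto
  qed (use P_disj in blast)
qed

lemma quadratic_bound_of_sqrt2_condition:
  fixes q m n :: nat
  assumes "q \<ge> 1"
    and "(1::int) = 2 * (2*int q*int n + 1)^2 - (2*int q*int m + 2*int q*int n + 1)^2
         \<or> real m \<ge> (sqrt 2 - 1) * real n + (sqrt 2 - 1) / (2 * real q)"
  shows "q*n^2 + n \<le> q*m^2 + 2*q*m*n + m"
proof -
  define x where "x = 2*int q*int n + 1"
  define y where "y = 2*int q*int m + 2*int q*int n + 1"
  have "2*x^2 \<le> y^2 + 1"
    using assms(2)
  proof
    assume "1 = 2 * (2*int q*int n + 1)^2 - (2*int q*int m + 2*int q*int n + 1)^2"
    then show ?thesis unfolding x_def y_def by linarith
  next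
    assume m: "real m \<ge> (sqrt 2 - 1) * real n + (sqrt 2 - 1) / (2 * real q)"
    have "sqrt 2 * x \<le> y"
    proof -
      have "2*real q*((sqrt 2 - 1) * real n + (sqrt 2 - 1) / (2 * real q)) \<le> 2*real q*real m"
        using m assms(1) by (intro mult_left_mono) auto
      also have "2*real q*((sqrt 2 - 1) * real n + (sqrt 2 - 1) / (2 * real q))
          = (sqrt 2 - 1) * (2*real q*real n + 1)"
        using assms(1) by (simp add: field_simps)
      finally show ?thesis unfolding x_def y_def by (simp add: algebra_simps)
    qed
    moreover have "0 \<le> sqrt 2 * x" unfolding x_def by simp
    ultimately have "(sqrt 2 * x)^2 \<le> (real_of_int y)^2" by (rule power_mono)
    then have "real_of_int (2*x^2) \<le> real_of_int (y^2)" by (simp add: power_mult_distrib)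
    then show ?thesis by linarith
  qed
  moreover have "y^2 + 1 - 2*x^2 = 4*int q*(int (q*m^2 + 2*q*m*n + m) - int (q*n^2 + n))"
    unfolding x_def y_def by (simp add: algebra_simps power2_eq_square)
  ultimately have "0 \<le> int q*(int (q*m^2 + 2*q*m*n + m) - int (q*n^2 + n))" by linarith
  moreover have "v \<le> u" if "0 \<le> int q*(u - v)" for u v :: int
    using that assms(1) by (simp add: zero_le_mult_iff)
  ultimately have "int (q*n^2 + n) \<le> int (q*m^2 + 2*q*m*n + m)" by blast
  then show ?thesis by (simp only: of_nat_le_iff)
qed

lemma even_pair_mod_4_param:
  fixes m n :: nat
  assumes "even m" and "even n" and "m \<le> n" and "(m + n) mod 4 = 0"
  obtains a d where "m = 2*a" and "n = 2*a + 4*d"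
proof -
  obtain a b where ab: "m = 2*a" "n = 2*b" using assms(1,2) by (auto elim!: evenE)
  have "a \<le> b" and "even (b - a)" using assms(3,4) unfolding ab by presburger+
  then obtain d where "b = a + 2*d" by (metis evenE le_add_diff_inverse)
  then show ?thesis using that ab by simp
qed

theorem theorem20:
  fixes p t m n :: nat and V :: "'a set" and E :: "'a \<Rightarrow> 'a \<Rightarrow> bool"
  assumes "p \<ge> 1" and "t \<ge> 1"
    and "even m" and "even n" and "m > 0" and "n > 0" and "m \<le> n"
    and "regular_graph V E" and "card V = p"
    and "(m + n) mod 4 = 0"
    and "(1::int) = 2 * (2*int p*int t*int n + 1)^2 - (2*int p*int t*int m + 2*int p*int t*int n + 1)^2
         \<or> real m \<ge> (sqrt 2 - 1) * real n + (sqrt 2 - 1) / (2 * real p * real t)"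
  shows "distance_magic (kron_verts (tKmn_verts t m n) V) (kron_adj (tKmn_adj t m n) E)"
proof -
  define q where "q = p*t"
  have q: "q \<ge> 1" using assms(1,2) unfolding q_def by simp
  obtain a d where ad: "m = 2*a" "n = 2*a + 4*d"
    using even_pair_mod_4_param[OF assms(3,4,7,10)] .
  have "(1::int) = 2 * (2*int q*int n + 1)^2 - (2*int q*int m + 2*int q*int n + 1)^2
      \<or> real m \<ge> (sqrt 2 - 1) * real n + (sqrt 2 - 1) / (2 * real q)"
    using assms(11) unfolding q_def of_nat_mult mult.assoc .
  then have "q*n^2 + n \<le> q*m^2 + 2*q*m*n + m" by (rule quadratic_bound_of_sqrt2_condition[OF q])
  then have "4*q*d*d + d \<le> 2*q*a*a"
    unfolding ad power2_eq_square by (simp add: algebra_simps)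
  then obtain B where "equal_sum_blocks (t*p) m n B"
    using ex_equal_sum_blocks[OF q] unfolding ad q_def by (auto simp: mult.commute)
  then show ?thesis by (rule distance_magic_kron_tKmn[OF assms(8,9)])
qed

end
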